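(* Let $m\le n$, $a>0$, $\lambda>0$, let $\mathscr{A}:\mathbb{R}^{m\times n}\to\mathbb{R}^p$ be linear with $\mathscr{A}(X)=A\,\mathrm{vec}(X)$ for $A\in\mathbb{R}^{p\times mn}$, $b\in\mathbb{R}^p$, and $0<\mu<\|A\|_2^{-2}$. If $X^*$ is a global minimizer of $\frac12\|\mathscr{A}(X)-b\|_2^2+\lambda T(X)$ over $X\in\mathbb{R}^{m\times n}$, then $$X^*=G_{\lambda\mu,a}(B_\mu(X^* )).$$ Equivalently, if $B_\mu(X^* )=U\,\mathrm{Diag}(\sigma^*_b)V^T$ is an SVD, then $X^*=U\,\mathrm{Diag}(g_{\lambda\mu,a}(\sigma^*_{b,1}),\dots,g_{\lambda\mu,a}(\sigma^*_{b,m}))V^T$.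
   Context: $\mathrm{vec}(X)$ stacks columns; $\|A\|_2$ is the spectral norm; $\mathscr{A}^*$ is the adjoint of $\mathscr{A}$ for the Frobenius inner product. $\rho_a(x)=\frac{(a+1)x}{a+x}$, $T(X)=\sum_{i=1}^{\mathrm{rank}(X)}\rho_a(\sigma_i(X))$ over singular values. $B_\mu(Z)=Z+\mu\mathscr{A}^*(b-\mathscr{A}(Z))$. For $\lambda'>0$: $h_{\lambda'}(x)=\mathrm{sgn}(x)\{\frac23(a+|x|)\cos(\varphi(x)/3)-\frac{2a}{3}+\frac{|x|}{3}\}$ with $\varphi(x)=\arccos(1-\frac{27\lambda' a(a+1)}{2(a+|x|)^3})$ and $\mathrm{sgn}(0)=0$; threshold $t=\lambda'\frac{a+1}{a}$ if $\lambda'\le\frac{a^2}{2(a+1)}$ and $t=\sqrt{2\lambda'(a+1)}-\frac a2$ otherwise; $g_{\lambda',a}(w)=0$ if $|w|\le t$, $h_{\lambda'}(w)$ if $|w|>t$; and for $Y$ with SVD $Y=U\mathrm{Diag}(\sigma)V^T$, $G_{\lambda',a}(Y)=U\,\mathrm{Diag}(g_{\lambda',a}(\sigma_1),\dots,g_{\lambda',a}(\sigma_m))V^T$. *)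

theory Defs
  imports "HOL-Analysis.Analysis"
begin

text \<open>Matrices in R^{m x n} are elements of real^'n^'m (row index 'm, column index 'n).
  The norm/inner product on this type are the Frobenius norm / inner product.\<close>

definition vecm :: "real^'n^'m \<Rightarrow> real^('m \<times> 'n)" where
  "vecm X = (\<chi> ij. X $ fst ij $ snd ij)"

definition Aop :: "real^('m \<times> 'n)^'p \<Rightarrow> real^'n^'m \<Rightarrow> real^'p" where
  "Aop A X = A *v vecm X"

definition spec_norm :: "real^'k^'p \<Rightarrow> real" where
  "spec_norm A = onorm (\<lambda>x. A *v x)"

definition Diag :: "('m \<Rightarrow> real) \<Rightarrow> real^'m^'m" where
  "Diag s = (\<chi> i j. if i = j then s i else 0)"

definition is_svd :: "real^'n^'m \<Rightarrow> real^'m^'m \<Rightarrow> ('m \<Rightarrow> real) \<Rightarrow> real^'m^'n \<Rightarrow> bool" where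
  "is_svd Y U s V \<longleftrightarrow> orthogonal_matrix U \<and> transpose V ** V = mat 1 \<and>
     (\<forall>i. 0 \<le> s i) \<and> Y = U ** Diag s ** transpose V"

definition sing_vals :: "real^'n^'m \<Rightarrow> ('m \<Rightarrow> real)" where
  "sing_vals X = (SOME s. \<exists>U V. is_svd X U s V)"

definition rho :: "real \<Rightarrow> real \<Rightarrow> real" where
  "rho a x = (a + 1) * x / (a + x)"

definition Tfun :: "real \<Rightarrow> real^'n^'m \<Rightarrow> real" where
  "Tfun a X = (\<Sum>i\<in>{i. sing_vals X i \<noteq> 0}. rho a (sing_vals X i))"

definition Bmu :: "real^('m \<times> 'n)^'p \<Rightarrow> real^'p \<Rightarrow> real \<Rightarrow> real^'n^'m \<Rightarrow> real^'n^'m" where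
  "Bmu A b mu Z = Z + mu *\<^sub>R adjoint (Aop A) (b - Aop A Z)"

definition phi_h :: "real \<Rightarrow> real \<Rightarrow> real \<Rightarrow> real" where
  "phi_h lam a x = arccos (1 - 27 * lam * a * (a + 1) / (2 * (a + \<bar>x\<bar>) ^ 3))"

definition h_fun :: "real \<Rightarrow> real \<Rightarrow> real \<Rightarrow> real" where
  "h_fun lam a x = sgn x * (2/3 * (a + \<bar>x\<bar>) * cos (phi_h lam a x / 3) - 2 * a / 3 + \<bar>x\<bar> / 3)"

definition thr :: "real \<Rightarrow> real \<Rightarrow> real" where
  "thr lam a = (if lam \<le> a\<^sup>2 / (2 * (a + 1)) then lam * (a + 1) / a
                else sqrt (2 * lam * (a + 1)) - a / 2)"

definition g_fun :: "real \<Rightarrow> real \<Rightarrow> real \<Rightarrow> real" where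
  "g_fun lam a w = (if \<bar>w\<bar> \<le> thr lam a then 0 else h_fun lam a w)"

definition G_op :: "real \<Rightarrow> real \<Rightarrow> real^'n^'m \<Rightarrow> real^'n^'m" where
  "G_op lam a Y = (let (U, s, V) = (SOME (U, s, V). is_svd Y U s V)
                   in U ** Diag (\<lambda>i. g_fun lam a (s i)) ** transpose V)"

end

theory Submission
  imports Defs
begin

text \<open>\<open>G\<^sub>\<lambda>\<^sub>\<mu>\<^sub>,\<^sub>a\<close> is the proximal map of \<open>\<lambda>\<mu> T\<close>. On a single singular value \<open>w\<close>, \<open>g\<close> minimises
  \<open>(x - w)\<^sup>2/2 + \<lambda>\<mu> \<rho>\<^sub>a(x)\<close> over \<open>x \<ge> 0\<close>: below the threshold the minimiser is \<open>0\<close>, above it the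
  stationarity condition is a cubic whose largest root is given by Viete's formula. A von Neumann
  type trace inequality, together with concavity of \<open>\<rho>\<^sub>a(\<surd>\<cdot>)\<close>, reduces the matrix problem to these
  scalar ones. Finally, since \<open>\<mu> \<parallel>A\<parallel>\<^sub>2\<^sup>2 < 1\<close>, the proximal objective at \<open>B\<^sub>\<mu>(X\<^sup>*)\<close> exceeds \<open>\<mu>\<close> times
  the original objective, up to a constant, by at least \<open>(1 - \<mu> \<parallel>A\<parallel>\<^sub>2\<^sup>2)/2 \<parallel>X - X\<^sup>*\<parallel>\<^sup>2\<close>, with
  equality at \<open>X\<^sup>*\<close>; so its minimiser \<open>G(B\<^sub>\<mu>(X\<^sup>*))\<close> is \<open>X\<^sup>*\<close>.\<close>

section \<open>The scalar thresholding problem\<close>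

lemma rho_nonneg: "a > 0 \<Longrightarrow> x \<ge> 0 \<Longrightarrow> rho a x \<ge> 0"
  by (simp add: rho_def)

lemma cubic_nonpos_le_root:
  fixes p c y y0 :: real
  assumes p: "p > 0" and y: "y \<ge> 2*p/3" and root: "y^3 - p*y^2 + c = 0"
    and nonpos: "y0^3 - p*y0^2 + c \<le> 0"
  shows "y0 \<le> y"
proof (rule ccontr)
  assume "\<not> y0 \<le> y"
  then have lt: "y < y0" by simp
  have "y0^2 + y0*y + y^2 \<ge> 3/4 * (y0+y)^2"
    using sum_squares_ge_zero[of "y0-y" 0] by (simp add: power2_eq_square algebra_simps)
  moreover have "3/4*(y0+y)^2 - p*(y0+y) > 0"
  proof -
    have "y0 + y > 4*p/3" using lt y by simp
    then have "(y0+y)*(3/4*(y0+y) - p) > 0" using p by simp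
    then show ?thesis by (simp add: power2_eq_square algebra_simps)
  qed
  ultimately have "(y0 - y) * (y0^2 + y0*y + y^2 - p*(y0+y)) > 0" using lt by simp
  moreover have "(y0 - y) * (y0^2 + y0*y + y^2 - p*(y0+y)) = (y0^3 - p*y0^2 + c) - (y^3 - p*y^2 + c)"
    by (simp add: algebra_simps power2_eq_square power3_eq_cube)
  ultimately show False using root nonpos by linarith
qed

lemma cubic_nonpos_imp_bound:
  fixes p c y0 :: real
  assumes "p > 0" and "y0 \<ge> 0" and "y0^3 - p*y0^2 + c \<le> 0"
  shows "27 * c \<le> 4 * p^3"
proof -
  have "y0^3 - p*y0^2 + 4*p^3/27 = (y0 - 2*p/3)^2*(y0+p/3)"
    by (simp add: field_simps power2_eq_square power3_eq_cube)
  moreover have "(y0 - 2*p/3)^2*(y0+p/3) \<ge> 0" using assms by simp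
  ultimately show ?thesis using assms by linarith
qed

text \<open>Viete's trigonometric solution of the cubic, via \<open>cos (3\<alpha>) = 4 cos\<^sup>3 \<alpha> - 3 cos \<alpha>\<close>.\<close>

lemma h_fun_cubic_root:
  fixes l a w :: real
  assumes a: "a > 0" and l: "l > 0" and w: "w > 0"
    and disc: "27 * (l*a*(a+1)) \<le> 4 * (a+w)^3"
  defines "y \<equiv> a + h_fun l a w"
  shows "y^3 - (a+w)*y^2 + l*a*(a+1) = 0" and "y \<ge> 2*(a+w)/3"
proof -
  define p where "p = a + w"
  have p: "p > 0" using a w by (simp add: p_def)
  define z where "z = 1 - 27 * l * a * (a + 1) / (2 * p ^ 3)"
  have z_le: "z \<le> 1" using a l p by (simp add: z_def)
  have z_ge: "-1 \<le> z"
  proof -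
    have "27 * l * a * (a + 1) / (2 * p ^ 3) \<le> 2"
      using disc p by (simp add: p_def divide_le_eq mult.assoc)
    then show ?thesis by (simp add: z_def)
  qed
  define \<alpha> where "\<alpha> = arccos z / 3"
  have cos3: "cos (3*\<alpha>) = z" using z_le z_ge by (simp add: \<alpha>_def)
  have y: "y = p/3 + 2*p/3 * cos \<alpha>"
    using w by (simp add: y_def h_fun_def phi_h_def \<alpha>_def z_def p_def algebra_simps)
  have "y^3 - p*y^2 + l*a*(a+1) = 2*p^3/27 * (4 * cos \<alpha> ^ 3 - 3 * cos \<alpha>) - 2*p^3/27 + l*a*(a+1)"
    by (simp add: y algebra_simps power2_eq_square power3_eq_cube)
  also have "\<dots> = 2*p^3/27 * z - 2*p^3/27 + l*a*(a+1)"
    by (simp add: cos_treble_cos[symmetric] cos3)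
  also have "\<dots> = 0"
    using p by (simp add: z_def field_simps)
  finally show "y^3 - (a+w)*y^2 + l*a*(a+1) = 0" by (simp add: p_def)
  have "0 \<le> \<alpha>" "\<alpha> \<le> pi/3"
    using arccos_lbound[OF z_ge z_le] arccos_ubound[OF z_ge z_le] by (auto simp: \<alpha>_def)
  then have "cos (pi/3) \<le> cos \<alpha>" by (intro cos_monotone_0_pi_le) auto
  then have "p * (1/2) \<le> p * cos \<alpha>" using p by (simp add: cos_60)
  then show "y \<ge> 2*(a+w)/3" unfolding y p_def by linarith
qed

lemma thr_pos:
  assumes a: "a > 0" and l: "l > 0"
  shows "thr l a > 0"
proof (cases "l \<le> a\<^sup>2 / (2 * (a + 1))")
  case True
  then show ?thesis using a l by (simp add: thr_def)
next
  case False
  then have "a^2 < 2*l*(a+1)" using a by (simp add: field_simps)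
  then have "sqrt (a^2) < sqrt (2*l*(a+1))" by (rule real_sqrt_less_mono)
  then show ?thesis using False a by (simp add: thr_def)
qed

lemma cubic_nonpos_above_thr:
  fixes l a w :: real
  assumes a: "a > 0" and l: "l > 0" and wt: "w > thr l a"
  defines "P \<equiv> \<lambda>y. y^3 - (a+w)*y^2 + l*a*(a+1)"
  shows "P (w + a/2) \<le> 0" and "w < a/2 \<Longrightarrow> P a \<le> 0"
proof -
  have P_mid: "P (w + a/2) = a * (l*(a+1) - (w + a/2)^2/2)"
    by (simp add: P_def field_simps power2_eq_square power3_eq_cube)
  have P_a: "P a = a * (l*(a+1) - a*w)"
    by (simp add: P_def algebra_simps power2_eq_square power3_eq_cube)
  have "P (w + a/2) \<le> 0 \<and> (w < a/2 \<longrightarrow> P a \<le> 0)"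
  proof (cases "l \<le> a\<^sup>2 / (2 * (a + 1))")
    case True
    then have "l*(a+1) < a*w" using wt a by (simp add: thr_def field_simps)
    moreover have "2*a*w \<le> (w + a/2)^2"
      using sum_squares_ge_zero[of "w - a/2" 0] by (simp add: algebra_simps power2_eq_square)
    ultimately show ?thesis using a P_mid P_a by (simp add: mult_nonneg_nonpos)
  next
    case False
    then have root_lt: "sqrt (2*l*(a+1)) < w + a/2" using wt by (simp add: thr_def)
    then have "(sqrt (2*l*(a+1)))^2 < (w + a/2)^2" using l a by (intro power_strict_mono) auto
    then have "P (w + a/2) \<le> 0" using l a P_mid by (simp add: mult_nonneg_nonpos)
    moreover have "a/2 < w"
    proof -
      have "a^2 < 2*l*(a+1)" using False a by (simp add: field_simps)
      then have "sqrt (a^2) < sqrt (2*l*(a+1))" by (rule real_sqrt_less_mono)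
      then show ?thesis using root_lt a by simp
    qed
    ultimately show ?thesis by simp
  qed
  then show "P (w + a/2) \<le> 0" and "w < a/2 \<Longrightarrow> P a \<le> 0" by auto
qed

text \<open>\<open>a + h\<close> is the largest root of the cubic, which is the stationarity equation of the scalar
  problem; it lies beyond \<open>w + a/2\<close> and \<open>a\<close>, where the cubic is nonpositive.\<close>

lemma h_fun_above_thr:
  fixes l a w :: real
  assumes a: "a > 0" and l: "l > 0" and wt: "w > thr l a"
  defines "h \<equiv> h_fun l a w"
  shows "h \<ge> 0" and "2*w \<le> a + 2*h" and "l*a*(a+1) = (w - h)*(a + h)^2"
proof -
  have w: "w > 0" using thr_pos[OF a l] wt by simp
  have p: "a + w > 0" using a w by simp
  note P_nonpos = cubic_nonpos_above_thr[OF a l wt]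
  have "27 * (l*a*(a+1)) \<le> 4 * (a+w)^3"
    using cubic_nonpos_imp_bound[OF p _ P_nonpos(1)] a w by simp
  note root = h_fun_cubic_root[OF a l w this, folded h_def]
  have "w + a/2 \<le> a + h" by (rule cubic_nonpos_le_root[OF p root(2,1) P_nonpos(1)])
  moreover have "a \<le> a + h"
  proof (cases "w < a/2")
    case True
    then show ?thesis by (rule cubic_nonpos_le_root[OF p root(2,1) P_nonpos(2)])
  qed (use \<open>w + a/2 \<le> a + h\<close> in simp)
  ultimately show "h \<ge> 0" and "2*w \<le> a + 2*h" by simp_all
  show "l*a*(a+1) = (w - h)*(a + h)^2"
    using root(1) by (simp add: algebra_simps power2_eq_square power3_eq_cube)
qed

lemma prox_objective_diff:
  fixes l a w h x :: real
  assumes a: "a > 0" and h: "h \<ge> 0" and x: "x \<ge> 0" and stat: "l*a*(a+1) = (w-h)*(a+h)^2"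
  shows "(x - w)^2/2 + l * rho a x - ((h - w)^2/2 + l * rho a h)
         = (x-h)^2*(a + 2*h - 2*w + x) / (2*(a+x))"
proof -
  have ax: "a + x > 0" and ah: "a + h > 0" using a h x by auto
  have "l * rho a x - l * rho a h = l*a*(a+1) * (x-h) / ((a+x)*(a+h))"
    using ax ah by (simp add: rho_def field_simps)
  also have "\<dots> = (w-h)*(a+h)*(x-h) / (a+x)"
    using ah unfolding stat by (simp add: power2_eq_square)
  finally have "l * rho a x - l * rho a h = (w-h)*(a+h)*(x-h) / (a+x)" .
  then show ?thesis
    using ax by (simp add: field_simps) (simp add: power2_eq_square algebra_simps)
qed

lemma zero_minimizes_below_thr:
  fixes l a w x :: real
  assumes a: "a > 0" and l: "l > 0" and w: "w \<ge> 0" and x: "x \<ge> 0" and wt: "w \<le> thr l a"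
  shows "w^2/2 \<le> (x - w)^2/2 + l * rho a x"
proof -
  have Q: "(x - 2*w)*(a+x) + 2*l*(a+1) \<ge> 0"
  proof (cases "l \<le> a\<^sup>2 / (2 * (a + 1))")
    case True
    then have "w \<le> l*(a+1)/a" and "l*(a+1)/a \<le> a/2"
      using wt a by (simp_all add: thr_def field_simps power2_eq_square)
    then have "a - 2*w \<ge> 0" and "2*l*(a+1) - 2*a*w \<ge> 0"
      using a by (linarith, simp add: field_simps)
    then have "x^2 + (a-2*w)*x + (2*l*(a+1) - 2*a*w) \<ge> 0"
      using x by (intro add_nonneg_nonneg zero_le_power2 mult_nonneg_nonneg)
    moreover have "(x - 2*w)*(a+x) + 2*l*(a+1) = x^2 + (a-2*w)*x + (2*l*(a+1) - 2*a*w)"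
      by (simp add: algebra_simps power2_eq_square)
    ultimately show ?thesis by (simp only:)
  next
    case False
    then have "w + a/2 \<le> sqrt (2*l*(a+1))" using wt by (simp add: thr_def)
    then have "(w + a/2)^2 \<le> (sqrt (2*l*(a+1)))^2"
      using w a by (intro power_mono) auto
    then have "(w + a/2)^2 \<le> 2*l*(a+1)" using l a by simp
    then have "(x + a/2 - w)^2 + (2*l*(a+1) - (w + a/2)^2) \<ge> 0"
      by (intro add_nonneg_nonneg zero_le_power2) simp
    moreover have "(x - 2*w)*(a+x) + 2*l*(a+1) = (x + a/2 - w)^2 + (2*l*(a+1) - (w + a/2)^2)"
      by (simp add: algebra_simps power2_eq_square)
    ultimately show ?thesis by (simp only:)
  qed
  have "(x - w)^2/2 + l * rho a x - w^2/2 = x * ((x - 2*w)*(a+x) + 2*l*(a+1)) / (2*(a+x))"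
    using a x by (simp add: rho_def field_simps power2_eq_square)
  moreover have "x * ((x - 2*w)*(a+x) + 2*l*(a+1)) / (2*(a+x)) \<ge> 0"
    using Q x a by simp
  ultimately show ?thesis by linarith
qed

lemma g_fun_nonneg:
  assumes a: "a > 0" and l: "l > 0" and w: "w \<ge> 0"
  shows "g_fun l a w \<ge> 0"
  using h_fun_above_thr(1)[OF a l] w by (simp add: g_fun_def)

lemma g_fun_minimizes:
  fixes l a w x :: real
  assumes a: "a > 0" and l: "l > 0" and w: "w \<ge> 0" and x: "x \<ge> 0"
  shows "(g_fun l a w - w)^2/2 + l * rho a (g_fun l a w) \<le> (x - w)^2/2 + l * rho a x"
proof (cases "w \<le> thr l a")
  case True
  then have "g_fun l a w = 0" using w by (simp add: g_fun_def)
  then show ?thesis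
    using zero_minimizes_below_thr[OF a l w x True] by (simp add: rho_def)
next
  case False
  then have wt: "w > thr l a" by simp
  define h where "h = h_fun l a w"
  have g: "g_fun l a w = h" using wt w by (simp add: g_fun_def h_def)
  note h = h_fun_above_thr[OF a l wt, folded h_def]
  have "(x - h)^2*(a + 2*h - 2*w + x) / (2*(a+x)) \<ge> 0"
    using h(2) x a by simp
  then show ?thesis
    unfolding g using prox_objective_diff[OF a h(1) x h(3)] by linarith
qed

section \<open>Spectral theorem and singular value decomposition\<close>

lemma symmetric_matrix_inner:
  fixes M :: "real^'n^'n"
  assumes "transpose M = M"
  shows "x \<bullet> (M *v y) = (M *v x) \<bullet> y"
  by (metis assms dot_lmul_matrix inner_commute vector_transpose_matrix)

lemma linear_le_quadratic_imp_zero: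
  fixes b c :: real
  assumes c: "c \<ge> 0" and le: "\<And>t. 2*t*b \<le> t^2*c"
  shows "b = 0"
proof -
  define t where "t = b/(c+1)"
  have ts: "t*(c+1) = b" using c by (simp add: t_def)
  have "(c+1)^2*(2*t*b) \<le> (c+1)^2*(t^2*c)" using le[of t] by (intro mult_left_mono) auto
  moreover have "(c+1)^2*(2*t*b) = 2*b*(t*(c+1))*(c+1)" and "(c+1)^2*(t^2*c) = (t*(c+1))^2*c"
    by (simp_all add: power2_eq_square algebra_simps)
  ultimately have "2*b*(t*(c+1))*(c+1) \<le> (t*(c+1))^2*c" by linarith
  then have "2*b*b*(c+1) \<le> b*b*c" unfolding ts by (simp add: power2_eq_square)
  then have "b*b*(c+2) \<le> 0" by (simp add: algebra_simps)
  then have "b*b \<le> 0" using c by (auto simp: mult_le_0_iff)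
  then show ?thesis by (metis mult_eq_0_iff order_antisym zero_le_square)
qed

text \<open>The quadratic form \<open>(x\<^sub>0 \<bullet> M x\<^sub>0) |y|\<^sup>2 - y \<bullet> M y\<close> is nonnegative on \<open>S\<close> and vanishes at \<open>x\<^sub>0\<close>, so its
  polarisation vanishes at \<open>x\<^sub>0\<close>.\<close>

lemma rayleigh_maximizer_eigenvector:
  fixes M :: "real^'n^'n"
  assumes sym: "transpose M = M" and S: "subspace S" and inv: "\<forall>x\<in>S. M *v x \<in> S"
    and x0S: "x0 \<in> S" and nx0: "x0 \<bullet> x0 = 1"
    and bound: "\<And>y. y \<in> S \<Longrightarrow> y \<bullet> (M *v y) \<le> (x0 \<bullet> (M *v x0)) * (y \<bullet> y)"
  shows "M *v x0 = (x0 \<bullet> (M *v x0)) *\<^sub>R x0"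
proof -
  define lmax where "lmax = x0 \<bullet> (M *v x0)"
  have polar: "x0 \<bullet> (M *v y) - lmax * (x0 \<bullet> y) = 0" if y: "y \<in> S" for y
  proof (rule linear_le_quadratic_imp_zero)
    show "lmax * (y \<bullet> y) - y \<bullet> (M *v y) \<ge> 0" using bound[OF y] by (simp add: lmax_def)
    fix t :: real
    have "x0 + t *\<^sub>R y \<in> S" using x0S y S by (simp add: subspace_add subspace_scale)
    then have "(x0 + t *\<^sub>R y) \<bullet> (M *v (x0 + t *\<^sub>R y)) \<le> lmax * ((x0 + t *\<^sub>R y) \<bullet> (x0 + t *\<^sub>R y))"
      unfolding lmax_def by (rule bound)
    moreover have "y \<bullet> (M *v x0) = x0 \<bullet> (M *v y)"
      using symmetric_matrix_inner[OF sym, of y x0] by (simp add: inner_commute)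
    ultimately show "2*t*(x0 \<bullet> (M *v y) - lmax * (x0 \<bullet> y)) \<le> t^2 * (lmax * (y \<bullet> y) - y \<bullet> (M *v y))"
      using nx0 by (simp add: lmax_def matrix_vector_right_distrib matrix_vector_mult_scaleR
          inner_add_left inner_add_right inner_commute power2_eq_square algebra_simps)
  qed
  define z where "z = M *v x0 - lmax *\<^sub>R x0"
  have "z \<in> S" using inv x0S S by (simp add: z_def subspace_diff subspace_scale)
  moreover have "x0 \<bullet> (M *v z) - lmax * (x0 \<bullet> z) = z \<bullet> z"
    using symmetric_matrix_inner[OF sym, of x0 z] by (simp add: z_def inner_diff_left inner_commute)
  ultimately have "z = 0" using polar by simp
  then show ?thesis by (simp add: z_def lmax_def)
qed

lemma symmetric_invariant_subspace_eigenvector: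
  fixes M :: "real^'n^'n"
  assumes sym: "transpose M = M" and S: "subspace S" and inv: "\<forall>x\<in>S. M *v x \<in> S"
    and ne: "\<not> S \<subseteq> {0}"
  obtains e d where "e \<in> S" and "norm e = 1" and "M *v e = d *\<^sub>R e"
proof -
  define K where "K = S \<inter> sphere 0 1"
  have "compact K" unfolding K_def
    by (intro closed_Int_compact closed_subspace S compact_sphere)
  moreover obtain x where x: "x \<in> S" "x \<noteq> 0" using ne by auto
  then have "x /\<^sub>R norm x \<in> K" using S by (auto simp: K_def subspace_scale)
  then have "K \<noteq> {}" by auto
  moreover have "continuous_on K (\<lambda>x. x \<bullet> (M *v x))"
    by (intro continuous_intros matrix_vector_mult_linear_continuous_on)
  ultimately obtain x0 where x0: "x0 \<in> K" and max: "\<forall>y\<in>K. y \<bullet> (M *v y) \<le> x0 \<bullet> (M *v x0)"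
    using continuous_attains_sup by blast
  have x0S: "x0 \<in> S" and nx0: "x0 \<bullet> x0 = 1" using x0 by (auto simp: K_def norm_eq_1)
  have "y \<bullet> (M *v y) \<le> (x0 \<bullet> (M *v x0)) * (y \<bullet> y)" if y: "y \<in> S" for y
  proof (cases "y = 0")
    case False
    define u where "u = y /\<^sub>R norm y"
    have "u \<in> K" using y False S by (auto simp: K_def u_def subspace_scale)
    then have "u \<bullet> (M *v u) \<le> x0 \<bullet> (M *v x0)" using max by simp
    moreover have yu: "y = norm y *\<^sub>R u" using False by (simp add: u_def)
    have "y \<bullet> (M *v y) = (y \<bullet> y) * (u \<bullet> (M *v u))"
      by (subst (1 2) yu) (simp add: matrix_vector_mult_scaleR dot_square_norm power2_eq_square)
    ultimately show ?thesis by (metis inner_ge_zero mult.commute mult_left_mono)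
  qed simp
  then have "M *v x0 = (x0 \<bullet> (M *v x0)) *\<^sub>R x0"
    by (rule rayleigh_maximizer_eigenvector[OF sym S inv x0S nx0])
  then show ?thesis using that[OF x0S] nx0 by (simp add: norm_eq_1)
qed

lemma symmetric_eigenvector_orthogonal_complement:
  fixes M :: "real^'n^'n"
  assumes sym: "transpose M = M" and S: "subspace S" and inv: "\<forall>x\<in>S. M *v x \<in> S"
    and e: "e \<in> S" "e \<noteq> 0" and eig: "M *v e = d *\<^sub>R e"
  defines "S' \<equiv> {y \<in> S. e \<bullet> y = 0}"
  shows "subspace S'" and "\<forall>x\<in>S'. M *v x \<in> S'" and "dim S' + 1 = dim S"
proof -
  have S'_eq: "S' = {y \<in> S. \<forall>x \<in> span {e}. orthogonal x y}"
    by (auto simp: S'_def orthogonal_def span_singleton span_base)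
  show "subspace S'"
    using subspace_inter[OF S subspace_orthogonal_to_vectors[of "span {e}"]]
    unfolding S'_eq by (simp add: Int_def)
  show "\<forall>x\<in>S'. M *v x \<in> S'"
    using inv symmetric_matrix_inner[OF sym, of e] by (auto simp: S'_def eig)
  have "span {e} \<subseteq> S" using e S by (simp add: span_minimal)
  then have "dim S' + dim (span {e}) = dim S"
    unfolding S'_eq by (rule dim_subspace_orthogonal_to_vectors[OF subspace_span S])
  then show "dim S' + 1 = dim S" using e by (simp add: dim_span)
qed

lemma symmetric_invariant_subspace_eigenbasis:
  fixes M :: "real^'n^'n"
  assumes sym: "transpose M = M"
  shows "subspace S \<Longrightarrow> \<forall>x\<in>S. M *v x \<in> S \<Longrightarrow>
    \<exists>B. B \<subseteq> S \<and> pairwise orthogonal B \<and> (\<forall>x\<in>B. norm x = 1) \<and> finite B \<and> card B = dim S \<and>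
        (\<forall>x\<in>B. \<exists>d. M *v x = d *\<^sub>R x)"
proof (induction "dim S" arbitrary: S rule: less_induct)
  case less
  show ?case
  proof (cases "S \<subseteq> {0}")
    case True
    then show ?thesis by (intro exI[of _ "{}"]) (simp add: dim_eq_0)
  next
    case False
    obtain e d where eS: "e \<in> S" and ne: "norm e = 1" and eig: "M *v e = d *\<^sub>R e"
      using symmetric_invariant_subspace_eigenvector[OF sym less.prems False] by blast
    have e0: "e \<noteq> 0" using ne by auto
    define S' where "S' = {y \<in> S. e \<bullet> y = 0}"
    note S' = symmetric_eigenvector_orthogonal_complement[OF sym less.prems eS e0 eig, folded S'_def]
    obtain B' where B': "B' \<subseteq> S'" "pairwise orthogonal B'" "\<forall>x\<in>B'. norm x = 1" "finite B'"
       "card B' = dim S'" "\<forall>x\<in>B'. \<exists>d. M *v x = d *\<^sub>R x"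
      using less.hyps[OF _ S'(1,2)] S'(3) by auto
    have "e \<notin> B'" using B'(1) e0 by (auto simp: S'_def)
    moreover have "\<forall>y\<in>B'. orthogonal e y" using B'(1) by (auto simp: S'_def orthogonal_def)
    ultimately show ?thesis
      using B' S'(3) eS ne eig
      by (intro exI[of _ "insert e B'"])
         (auto simp: pairwise_orthogonal_insert S'_def)
  qed
qed

lemma symmetric_orthonormal_eigenvectors:
  fixes M :: "real^'n^'n"
  assumes "transpose M = M"
  obtains u :: "'n \<Rightarrow> real^'n" where "\<And>i j. u i \<bullet> u j = (if i = j then 1 else 0)"
    and "\<And>i. \<exists>d. M *v u i = d *\<^sub>R u i"
proof -
  obtain B where B: "pairwise orthogonal B" "\<forall>x\<in>B. norm x = 1" "finite B" "card B = CARD('n)"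
     "\<forall>x\<in>B. \<exists>d. M *v x = d *\<^sub>R x"
    using symmetric_invariant_subspace_eigenbasis[OF assms, of UNIV] by (auto simp: dim_UNIV)
  obtain u where u: "bij_betw u (UNIV::'n set) B"
    using finite_same_card_bij[of "UNIV::'n set" B] B(3,4) by auto
  then have uB: "u i \<in> B" and u_inj: "u i = u j \<longleftrightarrow> i = j" for i j
    by (auto simp: bij_betw_def inj_eq)
  show ?thesis
  proof
    show "u i \<bullet> u j = (if i = j then 1 else 0)" for i j
      using B(1,2) uB[of i] uB[of j] u_inj[of i j]
      by (auto simp: pairwise_def orthogonal_def norm_eq_1)
    show "\<exists>d. M *v u i = d *\<^sub>R u i" for i using B(5) uB by blast
  qed
qed

lemma orthonormal_family_extend:
  fixes f :: "'m::finite \<Rightarrow> real^'n"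
  assumes mn: "CARD('m) \<le> CARD('n)"
    and orth: "\<And>i j. i \<in> I \<Longrightarrow> j \<in> I \<Longrightarrow> f i \<bullet> f j = (if i = j then 1 else 0)"
  obtains v where "\<And>i. i \<in> I \<Longrightarrow> v i = f i" and "\<And>i j. v i \<bullet> v j = (if i = j then 1 else 0)"
proof -
  define C where "C = {y. \<forall>x\<in>span (f ` I). orthogonal x y}"
  have "subspace C" unfolding C_def by (rule subspace_orthogonal_to_vectors)
  have "dim C + dim (span (f ` I)) = CARD('n)"
    using dim_subspace_orthogonal_to_vectors[of "span (f ` I)" UNIV]
    by (simp add: C_def subspace_span dim_UNIV)
  moreover have "dim (span (f ` I)) \<le> card I"
    by (metis card_image_le dim_le_card' dim_span finite finite_imageI order_trans)
  moreover have "card I + card (- I) = CARD('m)"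
    using card_Un_disjoint[of I "- I"] by (simp add: Compl_partition)
  ultimately have card_le: "card (- I) \<le> dim C" using mn by linarith
  obtain Bc where Bc: "Bc \<subseteq> C" "pairwise orthogonal Bc" "\<And>x. x \<in> Bc \<Longrightarrow> norm x = 1"
       "independent Bc" "card Bc = dim C"
    using orthonormal_basis_subspace[OF \<open>subspace C\<close>] by metis
  obtain w where w: "w ` (- I) \<subseteq> Bc" "inj_on w (- I)"
    using card_le_inj[of "- I" Bc] finiteI_independent[OF Bc(4)] card_le Bc(5) by auto
  define v where "v i = (if i \<in> I then f i else w i)" for i
  have wC: "w k \<in> C" if "k \<notin> I" for k using w(1) Bc(1) that by auto
  have f_w: "f k \<bullet> w l = 0" if "k \<in> I" "l \<notin> I" for k l
    using wC[OF that(2)] that(1) by (auto simp: C_def orthogonal_def intro: span_base)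
  have w_w: "w k \<bullet> w l = (if k = l then 1 else 0)" if "k \<notin> I" "l \<notin> I" for k l
  proof -
    have "w k \<in> Bc" "w l \<in> Bc" and "w k = w l \<longleftrightarrow> k = l"
      using that w by (auto simp: inj_on_def)
    then show ?thesis using Bc(2,3) by (auto simp: pairwise_def orthogonal_def norm_eq_1)
  qed
  show ?thesis
  proof
    show "v i = f i" if "i \<in> I" for i using that by (simp add: v_def)
    show "v i \<bullet> v j = (if i = j then 1 else 0)" for i j
      using orth f_w w_w f_w[of j i] by (auto simp: v_def inner_commute)
  qed
qed

lemma orthonormal_columns_transpose_mult:
  fixes u :: "'m::finite \<Rightarrow> real^'n"
  assumes "\<And>i j. u i \<bullet> u j = (if i = j then 1 else 0)"
  shows "transpose ((\<chi> r i. u i $ r) :: real^'m^'n) ** (\<chi> r i. u i $ r) = mat 1"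
  using assms by (simp add: matrix_matrix_mult_def transpose_def mat_def inner_vec_def vec_eq_iff mult.commute)

lemma transpose_mult_inner:
  fixes Y :: "real^'n^'m"
  shows "(transpose Y *v x) \<bullet> (transpose Y *v z) = x \<bullet> ((Y ** transpose Y) *v z)"
proof -
  have "(transpose Y *v x) \<bullet> (transpose Y *v z) = x \<bullet> (Y *v (transpose Y *v z))"
    by (metis dot_lmul_matrix transpose_transpose vector_transpose_matrix)
  then show ?thesis by (simp only: matrix_vector_mul_assoc)
qed

lemma Diag_transpose [simp]: "transpose (Diag s) = Diag s"
  by (simp add: Diag_def transpose_def vec_eq_iff)

text \<open>\<open>U\<close> diagonalises \<open>Y Y\<^sup>T\<close>, so the vectors \<open>Y\<^sup>T u\<^sub>i\<close> are pairwise orthogonal; \<open>V\<close> normalises them,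
  completed to an orthonormal family where they vanish.\<close>

lemma svd_exists:
  fixes Y :: "real^'n^'m"
  assumes mn: "CARD('m) \<le> CARD('n)"
  shows "\<exists>U s V. is_svd Y U s V"
proof -
  have sym: "transpose (Y ** transpose Y) = Y ** transpose Y" by (simp add: matrix_transpose_mul)
  obtain u :: "'m \<Rightarrow> real^'m" where u_orth: "\<And>i j. u i \<bullet> u j = (if i = j then 1 else 0)"
    and u_eig: "\<And>i. \<exists>d. (Y ** transpose Y) *v u i = d *\<^sub>R u i"
    by (rule symmetric_orthonormal_eigenvectors[OF sym]) (rule that)
  define y where "y i = transpose Y *v u i" for i
  have y_orth: "y i \<bullet> y j = 0" if "i \<noteq> j" for i j
  proof -
    obtain d where "(Y ** transpose Y) *v u j = d *\<^sub>R u j" using u_eig by blast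
    then show ?thesis using u_orth[of i j] that unfolding y_def transpose_mult_inner by simp
  qed
  define s where "s i = norm (y i)" for i
  have "(y i /\<^sub>R s i) \<bullet> (y j /\<^sub>R s j) = (if i = j then 1 else 0)"
    if "i \<in> {i. s i \<noteq> 0}" "j \<in> {i. s i \<noteq> 0}" for i j
    using that y_orth[of i j] by (simp add: s_def dot_square_norm power2_eq_square field_simps)
  then obtain v where v: "\<And>i. s i \<noteq> 0 \<Longrightarrow> v i = y i /\<^sub>R s i"
    and v_orth: "\<And>i j. v i \<bullet> v j = (if i = j then 1 else 0)"
  proof (rule orthonormal_family_extend[OF mn])
    fix v assume "\<And>i. i \<in> {i. s i \<noteq> 0} \<Longrightarrow> v i = y i /\<^sub>R s i"
      and "\<And>i j. v i \<bullet> v j = (if i = j then 1 else 0)"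
    then show thesis by (intro that[of v]) simp_all
  qed
  have sv: "s i *\<^sub>R v i = y i" for i
    by (cases "s i = 0") (auto simp: v s_def)
  define U :: "real^'m^'m" where "U = (\<chi> r i. u i $ r)"
  define V :: "real^'m^'n" where "V = (\<chi> r i. v i $ r)"
  have UU: "transpose U ** U = mat 1" unfolding U_def by (rule orthonormal_columns_transpose_mult[OF u_orth])
  have VV: "transpose V ** V = mat 1" unfolding V_def by (rule orthonormal_columns_transpose_mult[OF v_orth])
  have "V ** Diag s = transpose Y ** U"
  proof -
    have "(V ** Diag s) $ c $ i = s i * v i $ c" for c i
      by (simp add: matrix_matrix_mult_def Diag_def V_def if_distrib sum.delta' cong: if_cong)
    moreover have "(transpose Y ** U) $ c $ i = y i $ c" for c i
      unfolding y_def U_def matrix_matrix_mult_def matrix_vector_mult_def transpose_def by simp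
    ultimately show ?thesis using sv by (simp add: vec_eq_iff)
  qed
  then have "U ** Diag s ** transpose V = U ** (transpose U ** Y)"
    by (metis matrix_transpose_mul matrix_mul_assoc Diag_transpose transpose_transpose)
  also have "\<dots> = Y"
    using UU matrix_left_right_inverse by (metis matrix_mul_assoc matrix_mul_lid)
  finally have "is_svd Y U s V"
    using UU VV unfolding is_svd_def orthogonal_matrix by (simp add: s_def)
  then show ?thesis by blast
qed

section \<open>A trace inequality\<close>

lemma matrix_Diag_transpose_nth:
  fixes P :: "real^'k^'r" and Q :: "real^'k^'c"
  shows "(P ** Diag s ** transpose Q) $ a $ b = (\<Sum>i\<in>UNIV. P$a$i * s i * Q$b$i)"
  by (simp add: matrix_matrix_mult_def Diag_def transpose_def if_distrib sum.delta' cong: if_cong)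

lemma sum_swap_pairs:
  fixes f :: "'a::finite \<Rightarrow> 'b::finite \<Rightarrow> 'c::finite \<Rightarrow> 'd::finite \<Rightarrow> real"
  shows "(\<Sum>a\<in>UNIV. \<Sum>b\<in>UNIV. \<Sum>i\<in>UNIV. \<Sum>j\<in>UNIV. f a b i j)
       = (\<Sum>i\<in>UNIV. \<Sum>j\<in>UNIV. \<Sum>a\<in>UNIV. \<Sum>b\<in>UNIV. f a b i j)"
proof -
  have "(\<Sum>a\<in>UNIV. \<Sum>b\<in>UNIV. \<Sum>i\<in>UNIV. \<Sum>j\<in>UNIV. f a b i j)
      = (\<Sum>a\<in>UNIV. \<Sum>i\<in>UNIV. \<Sum>b\<in>UNIV. \<Sum>j\<in>UNIV. f a b i j)"
    by (rule sum.cong[OF refl], rule sum.swap)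
  also have "\<dots> = (\<Sum>a\<in>UNIV. \<Sum>i\<in>UNIV. \<Sum>j\<in>UNIV. \<Sum>b\<in>UNIV. f a b i j)"
    by (rule sum.cong[OF refl], rule sum.cong[OF refl], rule sum.swap)
  also have "\<dots> = (\<Sum>i\<in>UNIV. \<Sum>a\<in>UNIV. \<Sum>j\<in>UNIV. \<Sum>b\<in>UNIV. f a b i j)"
    by (rule sum.swap)
  also have "\<dots> = (\<Sum>i\<in>UNIV. \<Sum>j\<in>UNIV. \<Sum>a\<in>UNIV. \<Sum>b\<in>UNIV. f a b i j)"
    by (rule sum.cong[OF refl], rule sum.swap)
  finally show ?thesis .
qed

lemma inner_Diag_products:
  fixes P :: "real^'k^'r" and Q :: "real^'k^'c" and U :: "real^'l^'r" and V :: "real^'l^'c"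
  shows "(P ** Diag t ** transpose Q) \<bullet> (U ** Diag s ** transpose V)
    = (\<Sum>i\<in>UNIV. \<Sum>j\<in>UNIV. t i * s j * (\<Sum>a\<in>UNIV. P$a$i * U$a$j) * (\<Sum>b\<in>UNIV. Q$b$i * V$b$j))"
proof -
  have "(P ** Diag t ** transpose Q) \<bullet> (U ** Diag s ** transpose V)
     = (\<Sum>a\<in>UNIV. \<Sum>b\<in>UNIV. \<Sum>i\<in>UNIV. \<Sum>j\<in>UNIV. (P$a$i * t i * Q$b$i) * (U$a$j * s j * V$b$j))"
    by (simp add: inner_vec_def matrix_Diag_transpose_nth sum_product)
  also have "\<dots> = (\<Sum>i\<in>UNIV. \<Sum>j\<in>UNIV. \<Sum>a\<in>UNIV. \<Sum>b\<in>UNIV. (P$a$i * t i * Q$b$i) * (U$a$j * s j * V$b$j))"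
    by (rule sum_swap_pairs)
  also have "\<dots> = (\<Sum>i\<in>UNIV. \<Sum>j\<in>UNIV. t i * s j * (\<Sum>a\<in>UNIV. P$a$i * U$a$j) * (\<Sum>b\<in>UNIV. Q$b$i * V$b$j))"
    by (simp add: sum_product sum_distrib_left mult_ac)
  finally show ?thesis .
qed

lemma norm_transpose_mult_le:
  fixes V :: "real^'k^'c"
  assumes VV: "transpose V ** V = mat 1"
  shows "norm (transpose V *v x) \<le> norm x"
proof -
  define y where "y = transpose V *v x"
  have "norm (V *v y) = norm y"
  proof -
    have "(V *v y) \<bullet> (V *v y) = ((V *v y) v* V) \<bullet> y" by (simp add: dot_lmul_matrix)
    also have "\<dots> = (transpose V *v (V *v y)) \<bullet> y" by simp
    also have "\<dots> = y \<bullet> y" by (simp only: matrix_vector_mul_assoc VV matrix_vector_mul_lid)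
    finally show ?thesis by (simp add: norm_eq_sqrt_inner)
  qed
  moreover have "y \<bullet> y = x \<bullet> (V *v y)"
    unfolding y_def by (simp add: dot_lmul_matrix[symmetric])
  ultimately have "norm y ^ 2 \<le> norm x * norm y"
    using norm_cauchy_schwarz[of x "V *v y"] by (simp add: power2_norm_eq_inner)
  then have "norm y \<le> norm x"
    by (cases "norm y = 0") (auto simp: power2_eq_square)
  then show ?thesis by (simp add: y_def)
qed

lemma sum_sq_inner_columns_le:
  fixes Q :: "real^'k^'c" and V :: "real^'l^'c"
  assumes QQ: "transpose Q ** Q = mat 1" and VV: "transpose V ** V = mat 1"
  shows "(\<Sum>j\<in>UNIV. (\<Sum>b\<in>UNIV. Q$b$i * V$b$j)^2) \<le> 1"
proof -
  define q where "q = (\<chi> b. Q$b$i)"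
  have "(\<Sum>j\<in>UNIV. (\<Sum>b\<in>UNIV. Q$b$i * V$b$j)^2) = (norm (transpose V *v q))^2"
    unfolding power2_norm_eq_inner inner_vec_def matrix_vector_mult_def transpose_def q_def
    by (simp add: power2_eq_square mult.commute)
  also have "\<dots> \<le> (norm q)^2" using norm_transpose_mult_le[OF VV, of q] by (simp add: power_mono)
  also have "(norm q)^2 = (transpose Q ** Q) $ i $ i"
    by (simp add: power2_norm_eq_inner inner_vec_def matrix_matrix_mult_def transpose_def q_def)
  finally show ?thesis using QQ by (simp add: mat_def)
qed

text \<open>With \<open>W = P\<^sup>T U\<close> and \<open>Z = Q\<^sup>T V\<close>, the inner product
  is \<open>\<Sum>i j. t\<^sub>i s\<^sub>j W\<^sub>i\<^sub>j Z\<^sub>i\<^sub>j\<close>, and the matrix \<open>(W\<^sub>i\<^sub>j\<^sup>2 + Z\<^sub>i\<^sub>j\<^sup>2)/2 \<ge> |W\<^sub>i\<^sub>j Z\<^sub>i\<^sub>j|\<close> is doubly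
  substochastic.\<close>

lemma inner_svd_le_separable_bound:
  fixes P :: "real^'k^'r" and Q :: "real^'k^'c" and U :: "real^'l^'r" and V :: "real^'l^'c"
  assumes PP: "transpose P ** P = mat 1" and QQ: "transpose Q ** Q = mat 1"
    and UU: "transpose U ** U = mat 1" and VV: "transpose V ** V = mat 1"
    and t: "\<forall>i. t i \<ge> 0" and s: "\<forall>j. s j \<ge> 0"
    and F: "\<forall>i. F i \<ge> 0" and G: "\<forall>j. G j \<ge> 0" and FG: "\<And>i j. t i * s j \<le> F i + G j"
  shows "(P ** Diag t ** transpose Q) \<bullet> (U ** Diag s ** transpose V) \<le> (\<Sum>i\<in>UNIV. F i) + (\<Sum>j\<in>UNIV. G j)"
proof -
  define W where "W i j = (\<Sum>a\<in>UNIV. P$a$i * U$a$j)" for i j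
  define Z where "Z i j = (\<Sum>b\<in>UNIV. Q$b$i * V$b$j)" for i j
  define D where "D i j = ((W i j)^2 + (Z i j)^2)/2" for i j
  have row: "(\<Sum>j\<in>UNIV. D i j) \<le> 1" for i
    using sum_sq_inner_columns_le[OF PP UU, of i] sum_sq_inner_columns_le[OF QQ VV, of i]
    by (simp add: D_def W_def Z_def add_divide_distrib sum.distrib sum_divide_distrib[symmetric])
  have col: "(\<Sum>i\<in>UNIV. D i j) \<le> 1" for j
    using sum_sq_inner_columns_le[OF UU PP, of j] sum_sq_inner_columns_le[OF VV QQ, of j]
    by (simp add: D_def W_def Z_def add_divide_distrib sum.distrib sum_divide_distrib[symmetric] mult.commute)
  have "(P ** Diag t ** transpose Q) \<bullet> (U ** Diag s ** transpose V)
      = (\<Sum>i\<in>UNIV. \<Sum>j\<in>UNIV. t i * s j * W i j * Z i j)"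
    unfolding inner_Diag_products W_def Z_def ..
  also have "\<dots> \<le> (\<Sum>i\<in>UNIV. \<Sum>j\<in>UNIV. (F i + G j) * D i j)"
  proof (intro sum_mono)
    fix i j
    have "W i j * Z i j \<le> D i j"
      using sum_squares_ge_zero[of "W i j - Z i j" 0] by (simp add: D_def power2_eq_square algebra_simps)
    then have "t i * s j * (W i j * Z i j) \<le> t i * s j * D i j"
      using t s by (intro mult_left_mono) auto
    also have "\<dots> \<le> (F i + G j) * D i j" using FG[of i j] by (intro mult_right_mono) (auto simp: D_def)
    finally show "t i * s j * W i j * Z i j \<le> (F i + G j) * D i j" by (simp add: mult.assoc)
  qed
  also have "\<dots> = (\<Sum>i\<in>UNIV. F i * (\<Sum>j\<in>UNIV. D i j)) + (\<Sum>j\<in>UNIV. G j * (\<Sum>i\<in>UNIV. D i j))"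
    by (simp add: distrib_right sum.distrib sum_distrib_left) (rule sum.swap)
  also have "\<dots> \<le> (\<Sum>i\<in>UNIV. F i) + (\<Sum>j\<in>UNIV. G j)"
    using F G row col by (intro add_mono sum_mono) (simp_all add: mult_left_le)
  finally show ?thesis .
qed

section \<open>The penalty \<open>T\<close> on singular value decompositions\<close>

text \<open>Concavity of \<open>x \<mapsto> rho a (sqrt x)\<close>.\<close>

lemma rho_le_tangent_sq:
  fixes a g x :: real
  assumes a: "a > 0" and g: "g > 0" and x: "x \<ge> 0"
  shows "rho a x \<le> rho a g + a*(a+1)/(2*g*(a+g)^2) * (x^2 - g^2)"
proof -
  define K where "K = a*(a+1)/(2*g*(a+g)^2)"
  define D where "D = 2*g*(a+g)^2*(a+x)"
  have D: "D > 0" using a g x by (simp add: D_def)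
  have e1: "D * rho a g = 2*g*(a+g)*(a+x)*(a+1)*g"
    using a g by (simp add: D_def rho_def power2_eq_square field_simps)
  have e2: "D * rho a x = 2*g*(a+g)^2*(a+1)*x"
    using a x by (simp add: D_def rho_def power2_eq_square field_simps)
  have e3: "D * K = a*(a+1)*(a+x)"
    using a g by (simp add: D_def K_def)
  have "D * (rho a g + K * (x^2 - g^2) - rho a x) = D * rho a g + (D * K) * (x^2 - g^2) - D * rho a x"
    by (simp add: algebra_simps)
  also have "\<dots> = 2*g*(a+g)*(a+x)*(a+1)*g + a*(a+1)*(a+x)*(x^2-g^2) - 2*g*(a+g)^2*(a+1)*x"
    by (simp only: e1 e2 e3)
  also have "\<dots> = a*(a+1)*(x-g)^2*(a+x+2*g)"
    by (simp add: power2_eq_square algebra_simps)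
  also have "\<dots> \<ge> 0" using a g x by simp
  finally show ?thesis using D by (simp add: K_def zero_le_mult_iff)
qed

lemma rho_weighted_sum_le:
  fixes a g :: real and w t :: "'k::finite \<Rightarrow> real"
  assumes a: "a > 0" and g: "g \<ge> 0" and t: "\<forall>k. t k \<ge> 0" and w: "\<forall>k. w k \<ge> 0"
    and sum_w: "(\<Sum>k\<in>UNIV. w k) = 1" and g_sq: "g^2 = (\<Sum>k\<in>UNIV. w k * (t k)^2)"
  shows "(\<Sum>k\<in>UNIV. w k * rho a (t k)) \<le> rho a g"
proof (cases "g = 0")
  case True
  then have "\<forall>k\<in>UNIV. w k * (t k)^2 = 0"
    using g_sq w by (subst sum_nonneg_eq_0_iff[symmetric]) auto
  then have "\<forall>k. w k * rho a (t k) = 0" by (auto simp: rho_def)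
  then have "(\<Sum>k\<in>UNIV. w k * rho a (t k)) = 0" by (intro sum.neutral) blast
  then show ?thesis using True by (simp add: rho_def)
next
  case False
  then have "g > 0" using g by simp
  define K where "K = a*(a+1)/(2*g*(a+g)^2)"
  have "(\<Sum>k\<in>UNIV. w k * rho a (t k)) \<le> (\<Sum>k\<in>UNIV. w k * (rho a g + K * ((t k)^2 - g^2)))"
    using rho_le_tangent_sq[OF a \<open>g > 0\<close>] t w unfolding K_def by (intro sum_mono mult_left_mono) auto
  also have "\<dots> = (\<Sum>k\<in>UNIV. w k) * rho a g + K * ((\<Sum>k\<in>UNIV. w k * (t k)^2) - (\<Sum>k\<in>UNIV. w k) * g^2)"
    by (simp add: algebra_simps sum.distrib sum_distrib_left sum_subtractf sum_distrib_right)
  also have "\<dots> = rho a g" using sum_w g_sq by simp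
  finally show ?thesis .
qed

lemma Diag_mult: "Diag s ** Diag t = Diag (\<lambda>i. s i * t i)"
proof -
  have "(\<Sum>k\<in>UNIV. (if i = k then s i else 0) * (if k = j then t k else 0))
      = (\<Sum>k\<in>UNIV. if k = i then s i * (if i = j then t i else 0) else 0)" for i j
    by (rule sum.cong) auto
  then show ?thesis by (simp add: Diag_def matrix_matrix_mult_def vec_eq_iff)
qed

lemma svd_mult_transpose:
  fixes U :: "real^'m^'r" and V :: "real^'m^'c"
  assumes VV: "transpose V ** V = mat 1"
  shows "(U ** Diag s ** transpose V) ** transpose (U ** Diag s ** transpose V)
       = U ** Diag (\<lambda>i. s i ^ 2) ** transpose U"
proof -
  have "(U ** Diag s ** transpose V) ** transpose (U ** Diag s ** transpose V)
      = U ** Diag s ** (transpose V ** V) ** Diag s ** transpose U"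
    by (simp add: matrix_transpose_mul matrix_mul_assoc)
  also have "\<dots> = U ** (Diag s ** Diag s) ** transpose U" by (simp add: VV matrix_mul_assoc)
  finally show ?thesis by (simp add: Diag_mult power2_eq_square)
qed

lemma orthogonal_matrix_sum_sq:
  fixes A :: "real^'m^'m"
  assumes "orthogonal_matrix A"
  shows "(\<Sum>k\<in>UNIV. (A$j$k)^2) = 1" and "(\<Sum>j\<in>UNIV. (A$j$k)^2) = 1"
proof -
  have "(A ** transpose A) $ j $ j = 1" and "(transpose A ** A) $ k $ k = 1"
    using assms by (auto simp: orthogonal_matrix_def mat_def)
  then show "(\<Sum>k\<in>UNIV. (A$j$k)^2) = 1" and "(\<Sum>j\<in>UNIV. (A$j$k)^2) = 1"
    by (simp_all add: matrix_matrix_mult_def transpose_def power2_eq_square)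
qed

text \<open>The squared values \<open>t\<^sup>2\<close> and \<open>s\<^sup>2\<close> of two SVDs of the same matrix are related by the doubly
  stochastic matrix \<open>(A\<^sub>j\<^sub>k\<^sup>2)\<close>, \<open>A = U\<^sup>T P\<close>; concavity of \<open>rho a \<circ> sqrt\<close> does the rest.\<close>

lemma sum_rho_svd_le:
  fixes U P :: "real^'m^'m" and V Q :: "real^'m^'n"
  assumes a: "a > 0"
    and oU: "orthogonal_matrix U" and VV: "transpose V ** V = mat 1" and s: "\<forall>j. s j \<ge> 0"
    and oP: "orthogonal_matrix P" and QQ: "transpose Q ** Q = mat 1" and t: "\<forall>k. t k \<ge> 0"
    and eq: "U ** Diag s ** transpose V = P ** Diag t ** transpose Q"
  shows "(\<Sum>k\<in>UNIV. rho a (t k)) \<le> (\<Sum>j\<in>UNIV. rho a (s j))"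
proof -
  define A where "A = transpose U ** P"
  have oA: "orthogonal_matrix A" unfolding A_def using oU oP
    by (simp add: orthogonal_matrix_mul orthogonal_matrix_transpose)
  have UU: "transpose U ** U = mat 1" using oU by (simp add: orthogonal_matrix)
  have "transpose U ** (U ** Diag (\<lambda>i. s i ^ 2) ** transpose U) ** U
      = (transpose U ** U) ** Diag (\<lambda>i. s i ^ 2) ** (transpose U ** U)"
    by (simp add: matrix_mul_assoc)
  then have "Diag (\<lambda>i. s i ^ 2) = transpose U ** (U ** Diag (\<lambda>i. s i ^ 2) ** transpose U) ** U"
    by (simp add: UU)
  also have "\<dots> = A ** Diag (\<lambda>i. t i ^ 2) ** transpose A"
    using svd_mult_transpose[OF VV, of U s] svd_mult_transpose[OF QQ, of P t] eq
    by (simp add: A_def matrix_transpose_mul matrix_mul_assoc)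
  finally have Diag_sq: "Diag (\<lambda>i. s i ^ 2) = A ** Diag (\<lambda>i. t i ^ 2) ** transpose A" .
  have s_sq: "(s j)^2 = (\<Sum>k\<in>UNIV. (A$j$k)^2 * (t k)^2)" for j
  proof -
    have "(s j)^2 = Diag (\<lambda>i. s i ^ 2) $ j $ j" by (simp add: Diag_def)
    then show ?thesis unfolding Diag_sq matrix_Diag_transpose_nth
      by (simp add: transpose_def power2_eq_square mult_ac)
  qed
  have "(\<Sum>k\<in>UNIV. rho a (t k)) = (\<Sum>k\<in>UNIV. (\<Sum>j\<in>UNIV. (A$j$k)^2) * rho a (t k))"
    using orthogonal_matrix_sum_sq(2)[OF oA] by simp
  also have "\<dots> = (\<Sum>j\<in>UNIV. \<Sum>k\<in>UNIV. (A$j$k)^2 * rho a (t k))"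
    by (simp add: sum_distrib_right) (rule sum.swap)
  also have "\<dots> \<le> (\<Sum>j\<in>UNIV. rho a (s j))"
    using s t s_sq orthogonal_matrix_sum_sq(1)[OF oA]
    by (intro sum_mono rho_weighted_sum_le[OF a]) auto
  finally show ?thesis .
qed

lemma norm_svd_sq:
  fixes U :: "real^'m^'r" and V :: "real^'m^'c"
  assumes UU: "transpose U ** U = mat 1" and VV: "transpose V ** V = mat 1"
  shows "(norm (U ** Diag s ** transpose V))^2 = (\<Sum>i\<in>UNIV. (s i)^2)"
proof -
  have cols: "(\<Sum>a\<in>UNIV. W$a$i * W$a$j) = (if i = j then 1 else 0)"
    if "transpose W ** W = mat 1" for W :: "real^'m^'k" and i j
    using arg_cong[OF that, where f="\<lambda>M. M $ i $ j"]
    by (simp add: matrix_matrix_mult_def transpose_def mat_def)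
  show ?thesis
    unfolding power2_norm_eq_inner inner_Diag_products cols[OF UU] cols[OF VV]
    by (simp add: power2_eq_square if_distrib cong: if_cong)
qed

lemma svd_diff:
  fixes U :: "real^'m^'r" and V :: "real^'m^'c"
  shows "U ** Diag t ** transpose V - U ** Diag s ** transpose V = U ** Diag (\<lambda>i. t i - s i) ** transpose V"
  by (simp add: vec_eq_iff matrix_Diag_transpose_nth sum_subtractf[symmetric] algebra_simps)

lemma Tfun_eq_sum: "Tfun a X = (\<Sum>i\<in>UNIV. rho a (sing_vals X i))"
  unfolding Tfun_def by (rule sum.mono_neutral_left) (auto simp: rho_def)

lemma sing_vals_is_svd:
  fixes X :: "real^'n^'m"
  assumes "CARD('m) \<le> CARD('n)"
  obtains U V where "is_svd X U (sing_vals X) V"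
proof -
  have "\<exists>s U V. is_svd X U s V" using svd_exists[OF assms] by blast
  then have "\<exists>U V. is_svd X U (SOME s. \<exists>U V. is_svd X U s V) V" by (rule someI_ex)
  then show ?thesis using that by (auto simp: sing_vals_def)
qed

section \<open>Singular value thresholding is the proximal map\<close>

lemma svd_thresholding_objective_le:
  fixes B :: "real^'n^'m" and a l :: real
  assumes mn: "CARD('m) \<le> CARD('n)" and a: "a > 0" and l: "l > 0" and B: "is_svd B U s V"
  defines "Y \<equiv> U ** Diag (\<lambda>i. g_fun l a (s i)) ** transpose V"
  shows "1/2 * (norm (Y - B))^2 + l * Tfun a Y
         \<le> (\<Sum>j\<in>UNIV. (g_fun l a (s j) - s j)^2/2 + l * rho a (g_fun l a (s j)))"
proof -
  have oU: "orthogonal_matrix U" and VV: "transpose V ** V = mat 1" and s: "\<forall>i. 0 \<le> s i"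
    and B_eq: "B = U ** Diag s ** transpose V" using B by (auto simp: is_svd_def)
  have UU: "transpose U ** U = mat 1" using oU by (simp add: orthogonal_matrix)
  have g: "\<forall>i. 0 \<le> g_fun l a (s i)" using g_fun_nonneg[OF a l] s by simp
  obtain P Q where Y_svd: "is_svd Y P (sing_vals Y) Q" by (rule sing_vals_is_svd[OF mn])
  have "Tfun a Y \<le> (\<Sum>j\<in>UNIV. rho a (g_fun l a (s j)))"
    unfolding Tfun_eq_sum
    by (rule sum_rho_svd_le[OF a oU VV g]) (use Y_svd in \<open>auto simp: is_svd_def Y_def\<close>)
  then have "l * Tfun a Y \<le> (\<Sum>j\<in>UNIV. l * rho a (g_fun l a (s j)))"
    using l by (simp add: sum_distrib_left[symmetric])
  moreover have "(norm (Y - B))^2 = (\<Sum>j\<in>UNIV. (g_fun l a (s j) - s j)^2)"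
    unfolding Y_def B_eq svd_diff by (rule norm_svd_sq[OF UU VV])
  ultimately show ?thesis
    by (simp add: sum.distrib sum_divide_distrib)
qed

text \<open>The trace inequality is applied with \<open>F i + G j - t\<^sub>i s\<^sub>j\<close> equal to the gap in the scalar
  problem between \<open>t\<^sub>i\<close> and its minimiser \<open>g_fun l a s\<^sub>j\<close>.\<close>

lemma svd_thresholding_sum_le_objective:
  fixes B X :: "real^'n^'m" and a l :: real
  assumes mn: "CARD('m) \<le> CARD('n)" and a: "a > 0" and l: "l > 0" and B: "is_svd B U s V"
  shows "(\<Sum>j\<in>UNIV. (g_fun l a (s j) - s j)^2/2 + l * rho a (g_fun l a (s j)))
         \<le> 1/2 * (norm (X - B))^2 + l * Tfun a X"
proof -
  define g where "g j = g_fun l a (s j)" for j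
  have oU: "orthogonal_matrix U" and VV: "transpose V ** V = mat 1" and s: "\<forall>i. 0 \<le> s i"
    and B_eq: "B = U ** Diag s ** transpose V" using B by (auto simp: is_svd_def)
  have UU: "transpose U ** U = mat 1" using oU by (simp add: orthogonal_matrix)
  have g_min: "(g j - s j)^2/2 + l * rho a (g j) \<le> (x - s j)^2/2 + l * rho a x" if "x \<ge> 0" for j x
    using g_fun_minimizes[OF a l _ that, of "s j"] s by (simp add: g_def)
  define t where "t = sing_vals X"
  obtain P Q where "is_svd X P t Q" unfolding t_def by (rule sing_vals_is_svd[OF mn])
  then have oP: "orthogonal_matrix P" and QQ: "transpose Q ** Q = mat 1"
    and t: "\<forall>i. 0 \<le> t i" and X_eq: "X = P ** Diag t ** transpose Q"
    unfolding is_svd_def by blast+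
  have PP: "transpose P ** P = mat 1" using oP by (simp add: orthogonal_matrix)
  define F where "F i = (t i)^2/2 + l * rho a (t i)" for i
  define G where "G j = (s j)^2/2 - ((g j - s j)^2/2 + l * rho a (g j))" for j
  have F: "\<forall>i. F i \<ge> 0" using t rho_nonneg[OF a] l by (simp add: F_def)
  have G: "\<forall>j. G j \<ge> 0" using g_min[of 0] by (simp add: G_def rho_def)
  have FG: "t i * s j \<le> F i + G j" for i j
  proof -
    have "F i + G j - t i * s j = (t i - s j)^2/2 + l * rho a (t i) - ((g j - s j)^2/2 + l * rho a (g j))"
      by (simp add: F_def G_def power2_eq_square field_simps)
    then show ?thesis using g_min[of "t i" j] t by simp
  qed
  have "X \<bullet> B \<le> (\<Sum>i\<in>UNIV. F i) + (\<Sum>j\<in>UNIV. G j)"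
    unfolding X_eq B_eq by (rule inner_svd_le_separable_bound[OF PP QQ UU VV t s F G FG])
  moreover have "(norm (X - B))^2 = (\<Sum>i\<in>UNIV. (t i)^2) - 2 * (X \<bullet> B) + (\<Sum>j\<in>UNIV. (s j)^2)"
    using norm_svd_sq[OF PP QQ, of t] norm_svd_sq[OF UU VV, of s] X_eq B_eq
    by (simp add: power2_norm_eq_inner inner_diff_left inner_diff_right inner_commute)
  moreover have "l * Tfun a X = l * (\<Sum>i\<in>UNIV. rho a (t i))" by (simp add: Tfun_eq_sum t_def)
  moreover have "(\<Sum>i\<in>UNIV. F i) = (\<Sum>i\<in>UNIV. (t i)^2)/2 + l * (\<Sum>i\<in>UNIV. rho a (t i))"
    by (simp add: F_def sum.distrib sum_divide_distrib sum_distrib_left)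
  moreover have "(\<Sum>j\<in>UNIV. G j) = (\<Sum>j\<in>UNIV. (s j)^2)/2
      - (\<Sum>j\<in>UNIV. (g j - s j)^2/2 + l * rho a (g j))"
    by (simp add: G_def sum_subtractf sum_divide_distrib)
  ultimately show ?thesis unfolding g_def by linarith
qed

lemma svd_thresholding_minimizes:
  fixes B X :: "real^'n^'m" and a l :: real
  assumes mn: "CARD('m) \<le> CARD('n)" and a: "a > 0" and l: "l > 0" and B: "is_svd B U s V"
  defines "Y \<equiv> U ** Diag (\<lambda>i. g_fun l a (s i)) ** transpose V"
  shows "1/2 * (norm (Y - B))^2 + l * Tfun a Y \<le> 1/2 * (norm (X - B))^2 + l * Tfun a X"
  using svd_thresholding_objective_le[OF mn a l B] svd_thresholding_sum_le_objective[OF mn a l B, of X]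
  unfolding Y_def by linarith

section \<open>Minimisers are fixed points\<close>

lemma linear_vecm: "linear (vecm :: real^'n^'m \<Rightarrow> real^('m \<times> 'n))"
  by (rule linearI) (simp_all add: vecm_def vec_eq_iff)

lemma linear_Aop: "linear (Aop A)"
proof -
  have "Aop A = (\<lambda>x. A *v x) \<circ> vecm" by (simp add: Aop_def fun_eq_iff)
  then show ?thesis using linear_compose[OF linear_vecm matrix_vector_mul_linear] by simp
qed

lemma norm_vecm: "norm (vecm (X :: real^'n^'m)) = norm X"
proof -
  have "vecm X \<bullet> vecm X = X \<bullet> X"
    unfolding inner_vec_def vecm_def
    by (simp add: UNIV_Times_UNIV[symmetric] sum.cartesian_product' del: UNIV_Times_UNIV)
  then show ?thesis by (simp add: norm_eq_sqrt_inner)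
qed

lemma norm_Aop_le: "norm (Aop A X) \<le> spec_norm A * norm X"
  using onorm[OF matrix_vector_mul_bounded_linear, of A "vecm X"]
  by (simp add: Aop_def spec_norm_def norm_vecm)

lemma norm_diff_sq:
  fixes x y :: "'a::real_inner"
  shows "(norm (x - y))^2 = (norm x)^2 - 2*(x \<bullet> y) + (norm y)^2"
  by (simp add: power2_norm_eq_inner inner_diff_left inner_diff_right inner_commute)

lemma norm_sq_gradient_step:
  fixes L :: "'a::euclidean_space \<Rightarrow> 'b::euclidean_space"
  assumes "linear L"
  shows "(norm (Y - (X + mu *\<^sub>R adjoint L r)))^2
       = (norm (Y - X))^2 - 2*mu*(L (Y - X) \<bullet> r) + mu^2 * (norm (adjoint L r))^2"
proof -
  have e: "Y - (X + mu *\<^sub>R adjoint L r) = (Y - X) - mu *\<^sub>R adjoint L r" by (simp only: diff_diff_eq)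
  show ?thesis
    by (subst e, subst norm_diff_sq) (simp add: adjoint_works[OF assms] power_mult_distrib)
qed

lemma norm_sq_residual:
  fixes L :: "'a::real_vector \<Rightarrow> 'b::real_inner"
  assumes "linear L"
  shows "(norm (L Y - b))^2 = (norm (L (Y - X)))^2 - 2*(L (Y - X) \<bullet> (b - L X)) + (norm (L X - b))^2"
proof -
  have e: "L Y - b = L (Y - X) - (b - L X)" by (simp add: linear_diff[OF assms])
  show ?thesis by (subst e, subst norm_diff_sq) (simp add: norm_minus_commute)
qed

text \<open>Comparing the proximal inequality at \<open>B\<^sub>\<mu>(X\<^sup>*)\<close> with the optimality of \<open>X\<^sup>*\<close> (for the
  thresholded matrix \<open>Y\<close>), the linear terms cancel and \<open>\<parallel>Y - X\<^sup>*\<parallel>\<^sup>2 \<le> \<mu> \<parallel>A vec(Y - X\<^sup>*)\<parallel>\<^sup>2 \<le> \<mu> \<parallel>A\<parallel>\<^sub>2\<^sup>2 \<parallel>Y - X\<^sup>*\<parallel>\<^sup>2\<close> remains.\<close>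

lemma minimizer_eq_svd_thresholding:
  fixes A :: "real^('m::finite \<times> 'n::finite)^'p::finite" and b :: "real^'p" and Xs :: "real^'n^'m"
    and a lam mu :: real
  assumes mn: "CARD('m) \<le> CARD('n)"
    and a: "a > 0" and lam: "lam > 0" and mu: "mu > 0" and mu_A: "mu * (spec_norm A)\<^sup>2 < 1"
    and opt: "\<forall>X :: real^'n^'m. 1/2 * (norm (Aop A Xs - b))\<^sup>2 + lam * Tfun a Xs
                          \<le> 1/2 * (norm (Aop A X - b))\<^sup>2 + lam * Tfun a X"
    and B: "is_svd (Bmu A b mu Xs) U s V"
  shows "Xs = U ** Diag (\<lambda>i. g_fun (lam * mu) a (s i)) ** transpose V"
proof -
  define Y where "Y = U ** Diag (\<lambda>i. g_fun (lam * mu) a (s i)) ** transpose V"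
  define D where "D = Y - Xs"
  define r where "r = b - Aop A Xs"
  note lin = linear_Aop[of A]
  have Bmu: "Bmu A b mu Xs = Xs + mu *\<^sub>R adjoint (Aop A) r" by (simp add: Bmu_def r_def)
  have "1/2 * (norm (Y - Bmu A b mu Xs))^2 + (lam*mu) * Tfun a Y
      \<le> 1/2 * (norm (Xs - Bmu A b mu Xs))^2 + (lam*mu) * Tfun a Xs"
    unfolding Y_def using lam mu by (intro svd_thresholding_minimizes[OF mn a _ B]) simp
  then have prox: "1/2 * (norm D)^2 - mu*(Aop A D \<bullet> r) + (lam*mu) * Tfun a Y \<le> (lam*mu) * Tfun a Xs"
    unfolding Bmu norm_sq_gradient_step[OF lin] by (simp add: D_def linear_0[OF lin] algebra_simps)
  have "lam * Tfun a Xs \<le> 1/2 * (norm (Aop A D))^2 - (Aop A D \<bullet> r) + lam * Tfun a Y"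
    using opt[rule_format, of Y] unfolding norm_sq_residual[OF lin, of Y b Xs]
    by (simp add: D_def r_def algebra_simps)
  then have "mu * (lam * Tfun a Xs) \<le> mu * (1/2 * (norm (Aop A D))^2 - (Aop A D \<bullet> r) + lam * Tfun a Y)"
    using mu by (intro mult_left_mono) auto
  with prox have "(norm D)^2 \<le> mu * (norm (Aop A D))^2" by (simp add: algebra_simps)
  also have "\<dots> \<le> mu * (spec_norm A * norm D)^2"
    using norm_Aop_le[of A D] mu by (intro mult_left_mono power_mono) auto
  finally have "(1 - mu * (spec_norm A)^2) * (norm D)^2 \<le> 0" by (simp add: algebra_simps power_mult_distrib)
  then have "D = 0" using mu_A by (simp add: mult_le_0_iff)
  then show ?thesis by (simp add: D_def Y_def)
qed

theorem mainTheorem4: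
  fixes A :: "real^('m::finite \<times> 'n::finite)^'p::finite" and b :: "real^'p" and Xs :: "real^'n^'m"
    and a lam mu :: real
  assumes "CARD('m) \<le> CARD('n)"
    and "a > 0" and "lam > 0"
    and "mu > 0" and "mu * (spec_norm A)\<^sup>2 < 1"
    and "\<forall>X :: real^'n^'m. 1/2 * (norm (Aop A Xs - b))\<^sup>2 + lam * Tfun a Xs
                          \<le> 1/2 * (norm (Aop A X - b))\<^sup>2 + lam * Tfun a X"
  shows "Xs = G_op (lam * mu) a (Bmu A b mu Xs) \<and>
         (\<forall>U s V. is_svd (Bmu A b mu Xs) U s V \<longrightarrow>
                  Xs = U ** Diag (\<lambda>i. g_fun (lam * mu) a (s i)) ** transpose V)"
proof -
  define B where "B = Bmu A b mu Xs"
  have every_svd: "\<forall>U s V. is_svd B U s V \<longrightarrow> Xs = U ** Diag (\<lambda>i. g_fun (lam * mu) a (s i)) ** transpose V"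
    using minimizer_eq_svd_thresholding[OF assms] by (simp add: B_def)
  obtain U s V where chosen: "(SOME (U, s, V). is_svd B U s V) = (U, s, V)"
    by (metis prod_cases3)
  have "\<exists>x. case x of (U, s, V) \<Rightarrow> is_svd B U s V" using svd_exists[OF assms(1), of B] by auto
  then have "is_svd B U s V" using someI_ex chosen by (metis case_prod_conv)
  then have "Xs = G_op (lam * mu) a B" using every_svd by (simp add: G_op_def chosen)
  then show ?thesis using every_svd by (simp add: B_def)
qed

end
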